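(* Let $C\ge 2$ and let $w^*_{1},\dots,w^*_{C}\in\mathbb{R}^d/\mathbb{R}\mathbf{1}$ (one weight vector per class). Let $$\mathcal{B}=\{x\in\mathbb{R}^d/\mathbb{R}\mathbf{1}:\ d_{\rm tr}(x,-w^*_{j})=d_{\rm tr}(x,-w^*_{j'})\text{ for some } j\neq j'\}.$$ Then $\mathcal{B}$ contains no full-dimensional cell (i.e. has empty interior in $\mathbb{R}^d/\mathbb{R}\mathbf{1}\cong\mathbb{R}^{d-1}$) if and only if for all $i\neq j$ in $[C]$ the pair $w^*_i,w^*_j$ is in weak general position.
   Context: The tropical projective torus is $\mathbb{R}^d/\mathbb{R}\mathbf{1}$, $\mathbf{1}=(1,\dots,1)$, identified with $\mathbb{R}^{d-1}$ via $x\mapsto(x_2-x_1,\dots,x_d-x_1)$. Tropical metric: $d_{\rm tr}(x,y)=\max_{i}(x_i-y_i)-\min_i(x_i-y_i)$. A pair of points $p,q\in\mathbb{R}^d/\mathbb{R}\mathbf{1}$ is in weak general position (with respect to the tropical ball) if they do not lie in a common hyperplane parallel to a facet of a tropical ball $\{y:d_{\rm tr}(x,y)\le r\}$, i.e. $p_a-p_b\neq q_a-q_b$ for all $a\neq b$ in $[d]$. $[C]=\{1,\dots,C\}$. *)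

theory Defs
  imports "HOL-Analysis.Analysis"
begin

text \<open>Points of R^d are vectors indexed by the finite type 'm option, so
  d = CARD('m) + 1 >= 2; coordinate None plays the role of the first coordinate.\<close>

definition tdist :: "real ^ 'd::finite \<Rightarrow> real ^ 'd \<Rightarrow> real" where
  "tdist x y = (MAX i. x $ i - y $ i) - (MIN i. x $ i - y $ i)"

text \<open>Inverse of the identification R^d / R1 -> R^(d-1), x |-> (x_i - x_1)_{i>1}:
  the representative with first coordinate 0.\<close>
definition lift :: "real ^ 'm::finite \<Rightarrow> real ^ ('m option)" where
  "lift y = (\<chi> i. case i of None \<Rightarrow> 0 | Some k \<Rightarrow> y $ k)"

definition weak_gen_pos :: "real ^ 'd::finite \<Rightarrow> real ^ 'd \<Rightarrow> bool" where
  "weak_gen_pos p q \<longleftrightarrow> (\<forall>a b. a \<noteq> b \<longrightarrow> p $ a - p $ b \<noteq> q $ a - q $ b)"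

definition boundary_set :: "nat \<Rightarrow> (nat \<Rightarrow> real ^ ('m::finite option)) \<Rightarrow> (real ^ 'm) set" where
  "boundary_set C w = {y. \<exists>j\<in>{1..C}. \<exists>j'\<in>{1..C}. j \<noteq> j' \<and>
      tdist (lift y) (- w j) = tdist (lift y) (- w j')}"

end

theory Submission imports Defs begin

text \<open>Write \<open>f\<^sub>u(x) = x + u\<close>, so that \<open>tdist x (-u)\<close> is the spread
  \<open>max f\<^sub>u - min f\<^sub>u\<close>. If \<open>x\<close> is equidistant from \<open>-u\<close> and \<open>-v\<close>, choosing
  maximizers \<open>a, c\<close> and minimizers \<open>b, e\<close> of \<open>f\<^sub>u, f\<^sub>v\<close> gives the linear relation
  \<open>(x\<^sub>a - x\<^sub>b) - (x\<^sub>c - x\<^sub>e) = (v\<^sub>c - v\<^sub>e) - (u\<^sub>a - u\<^sub>b)\<close>; weak general position of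
  \<open>u, v\<close> rules out exactly the index patterns for which the left side vanishes
  identically. Hence the boundary lies in finitely many affine hyperplanes and is
  negligible. Conversely, if \<open>u\<^sub>a - u\<^sub>b = v\<^sub>a - v\<^sub>b\<close>, then on the open set where
  \<open>x\<^sub>a\<close> is far above and \<open>x\<^sub>b\<close> far below all other coordinates, both spreads equal
  \<open>x\<^sub>a - x\<^sub>b\<close> plus this common difference.\<close>

lemma tdist_attained:
  fixes x y :: "real ^ 'd::finite"
  assumes "1 < CARD('d)"
  obtains a b where "a \<noteq> b" "\<And>k. x$k - y$k \<le> x$a - y$a" "\<And>k. x$b - y$b \<le> x$k - y$k"
    "tdist x y = (x$a - y$a) - (x$b - y$b)"
proof -
  define f where "f k = x$k - y$k" for k
  have "(MAX k. f k) \<in> range f" "(MIN k. f k) \<in> range f" by (auto intro: Max_in Min_in)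
  then obtain a b where a: "(MAX k. f k) = f a" and b: "(MIN k. f k) = f b" by (metis imageE)
  have max: "f k \<le> f a" and min: "f b \<le> f k" for k
    unfolding a[symmetric] b[symmetric] by (auto intro: Max_ge Min_le)
  have dist: "tdist x y = f a - f b"
    using a b by (simp add: tdist_def f_def)
  show thesis
  proof (cases "a = b")
    case False
    then show thesis using that max min dist unfolding f_def by blast
  next
    case True
    \<comment> \<open>\<open>f\<close> is constant, so any two distinct indices serve as maximizer and minimizer.\<close>
    then have const: "f k = f a" for k using max min by (meson order.antisym)
    obtain a' b' :: 'd where "a' \<noteq> b'"
      using assms card_le_Suc0_iff_eq[of "UNIV :: 'd set"] by auto
    moreover have "f k \<le> f a'" "f b' \<le> f k" "tdist x y = f a' - f b'" for k
      using True dist const[of k] const[of a'] const[of b'] by simp_all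
    ultimately show thesis using that[of a' b'] unfolding f_def by blast
  qed
qed

lemma equidistant_imp_double_difference:
  fixes x u v :: "real ^ 'd::finite"
  assumes "1 < CARD('d)" and wg: "weak_gen_pos u v" and eq: "tdist x (- u) = tdist x (- v)"
  obtains a b c e where "a \<noteq> b" "c \<noteq> e" "(a, b) \<noteq> (c, e)"
    "(x$a - x$b) - (x$c - x$e) = (v$c - v$e) - (u$a - u$b)"
proof -
  obtain a b where ab: "a \<noteq> b" "tdist x (- u) = (x$a + u$a) - (x$b + u$b)"
    using tdist_attained[OF assms(1), of x "- u"] by (metis diff_minus_eq_add vector_uminus_component)
  obtain c e where ce: "c \<noteq> e" "tdist x (- v) = (x$c + v$c) - (x$e + v$e)"
    using tdist_attained[OF assms(1), of x "- v"] by (metis diff_minus_eq_add vector_uminus_component)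
  have "(a, b) \<noteq> (c, e)"
  proof
    assume "(a, b) = (c, e)"
    then have "u$a - u$b = v$a - v$b" using ab(2) ce(2) eq by simp
    then show False using wg ab(1) unfolding weak_gen_pos_def by blast
  qed
  moreover have "(x$a - x$b) - (x$c - x$e) = (v$c - v$e) - (u$a - u$b)"
    using ab(2) ce(2) eq by linarith
  ultimately show thesis using that ab(1) ce(1) by blast
qed

lemma double_difference_nonzero:
  fixes a b c e :: "'d::finite"
  assumes "a \<noteq> b" "c \<noteq> e" "(a, b) \<noteq> (c, e)"
  shows "\<exists>z :: real ^ 'd. (z$a - z$b) - (z$c - z$e) \<noteq> 0"
proof (cases "a = c")
  case True
  then show ?thesis using assms by (intro exI[of _ "axis b 1"]) (auto simp: axis_def)
next
  case False
  then show ?thesis using assms by (intro exI[of _ "axis a 1"]) (auto simp: axis_def)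
qed

lemma lift_normalize: "lift (\<chi> k. z $ Some k - z $ None) $ i = z $ i - z $ None"
  by (cases i) (simp_all add: lift_def)

lemma continuous_on_lift_component: "continuous_on UNIV (\<lambda>y. lift y $ i)"
  by (cases i) (simp_all add: lift_def linear_continuous_on bounded_linear_vec_nth)

lemma negligible_lift_double_difference:
  fixes a b c e :: "'m::finite option"
  assumes "a \<noteq> b" "c \<noteq> e" "(a, b) \<noteq> (c, e)"
  shows "negligible {y :: real ^ 'm. (lift y$a - lift y$b) - (lift y$c - lift y$e) = r}"
proof -
  define coeff :: "'m option \<Rightarrow> real ^ 'm" where
    "coeff i = (case i of None \<Rightarrow> 0 | Some k \<Rightarrow> axis k 1)" for i
  define g where "g = (coeff a - coeff b) - (coeff c - coeff e)"
  have lift_inner: "lift y $ i = coeff i \<bullet> y" for y i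
    by (cases i) (simp_all add: lift_def coeff_def inner_axis inner_commute)
  have form: "(lift y$a - lift y$b) - (lift y$c - lift y$e) = g \<bullet> y" for y
    by (simp add: lift_inner g_def inner_diff_left)
  obtain z :: "real ^ 'm option" where z: "(z$a - z$b) - (z$c - z$e) \<noteq> 0"
    using double_difference_nonzero[OF assms] by blast
  \<comment> \<open>The form is invariant under adding multiples of \<open>\<one>\<close>, so its value at \<open>z\<close> is attained on the lifted chart.\<close>
  have "g \<bullet> (\<chi> k. z $ Some k - z $ None) \<noteq> 0"
    using z unfolding form[symmetric] lift_normalize by simp
  then have "g \<noteq> 0" by auto
  then show ?thesis unfolding form by (intro negligible_hyperplane) auto
qed

lemma interior_boundary_set_empty:
  fixes w :: "nat \<Rightarrow> real ^ ('m::finite option)"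
  assumes wg: "\<forall>i\<in>{1..C}. \<forall>j\<in>{1..C}. i \<noteq> j \<longrightarrow> weak_gen_pos (w i) (w j)"
  shows "interior (boundary_set C w) = {}"
proof -
  define P :: "('m option \<times> 'm option \<times> 'm option \<times> 'm option) set"
    where "P = {(a, b, c, e). a \<noteq> b \<and> c \<noteq> e \<and> (a, b) \<noteq> (c, e)}"
  define H where "H = (\<lambda>(i, j, a, b, c, e). {y :: real ^ 'm.
      (lift y$a - lift y$b) - (lift y$c - lift y$e) = (w j$c - w j$e) - (w i$a - w i$b)})"
  have "boundary_set C w \<subseteq> \<Union> (H ` ({1..C} \<times> {1..C} \<times> P))"
  proof
    fix y assume "y \<in> boundary_set C w"
    then obtain i j where ij: "i \<in> {1..C}" "j \<in> {1..C}" "i \<noteq> j"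
      and eq: "tdist (lift y) (- w i) = tdist (lift y) (- w j)" by (auto simp: boundary_set_def)
    obtain a b c e where "a \<noteq> b" "c \<noteq> e" "(a, b) \<noteq> (c, e)"
      and "(lift y$a - lift y$b) - (lift y$c - lift y$e) = (w j$c - w j$e) - (w i$a - w i$b)"
      by (rule equidistant_imp_double_difference[OF _ _ eq]) (use wg ij in auto)
    then have "(a, b, c, e) \<in> P" "y \<in> H (i, j, a, b, c, e)" unfolding P_def H_def by auto
    with ij show "y \<in> \<Union> (H ` ({1..C} \<times> {1..C} \<times> P))" by blast
  qed
  moreover have "negligible (\<Union> (H ` ({1..C} \<times> {1..C} \<times> P)))"
    by (intro negligible_Union finite_imageI finite_cartesian_product)
       (auto simp: P_def H_def intro!: negligible_lift_double_difference)
  ultimately have "negligible (interior (boundary_set C w))"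
    using negligible_subset interior_subset by blast
  then show ?thesis using open_not_negligible open_interior by blast
qed

lemma tdist_neg_dominated:
  fixes x u :: "real ^ 'd::finite"
  assumes "\<And>k. \<bar>u$k\<bar> \<le> B"
    and "\<And>k. k \<noteq> a \<Longrightarrow> x$k + 2*B < x$a" and "\<And>k. k \<noteq> b \<Longrightarrow> x$b + 2*B < x$k"
  shows "tdist x (- u) = (x$a + u$a) - (x$b + u$b)"
proof -
  have "x$k + u$k \<le> x$a + u$a" "x$b + u$b \<le> x$k + u$k" for k
    using assms(1)[of k] assms(1)[of a] assms(1)[of b] assms(2)[of k] assms(3)[of k]
    by (cases "k = a"; cases "k = b"; auto simp: abs_le_iff)+
  then have "(MAX k. x$k + u$k) = x$a + u$a" "(MIN k. x$k + u$k) = x$b + u$b"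
    by (auto intro: Max_eqI Min_eqI)
  then show ?thesis by (simp add: tdist_def)
qed

lemma interior_boundary_set_nonempty:
  fixes w :: "nat \<Rightarrow> real ^ ('m::finite option)"
  assumes ij: "i \<in> {1..C}" "j \<in> {1..C}" "i \<noteq> j" and "\<not> weak_gen_pos (w i) (w j)"
  shows "interior (boundary_set C w) \<noteq> {}"
proof -
  obtain a b where ab: "a \<noteq> b" "w i$a - w i$b = w j$a - w j$b"
    using assms(4) unfolding weak_gen_pos_def by auto
  define B where "B = (\<Sum>k\<in>UNIV. \<bar>w i$k\<bar> + \<bar>w j$k\<bar>)"
  have bound: "\<bar>w i$k\<bar> \<le> B" "\<bar>w j$k\<bar> \<le> B" for k
    using member_le_sum[of k UNIV "\<lambda>k. \<bar>w i$k\<bar> + \<bar>w j$k\<bar>"] unfolding B_def by auto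
  define D where "D = {y. \<forall>k. (k \<noteq> a \<longrightarrow> lift y$k + 2*B < lift y$a) \<and>
                                (k \<noteq> b \<longrightarrow> lift y$b + 2*B < lift y$k)}"
  have "D \<subseteq> boundary_set C w"
  proof
    fix y assume "y \<in> D"
    then have "tdist (lift y) (- w t) = (lift y$a + w t$a) - (lift y$b + w t$b)" if "t \<in> {i, j}" for t
      using bound that by (intro tdist_neg_dominated) (auto simp: D_def)
    then have "tdist (lift y) (- w i) = tdist (lift y) (- w j)" using ab(2) by simp
    then show "y \<in> boundary_set C w" using ij unfolding boundary_set_def by blast
  qed
  moreover have "open D"
  proof -
    have "D = (\<Inter>k\<in>UNIV. {y. k \<noteq> a \<longrightarrow> lift y$k + 2*B < lift y$a} \<inter>
                          {y. k \<noteq> b \<longrightarrow> lift y$b + 2*B < lift y$k})"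
      unfolding D_def by auto
    also have "open \<dots>"
      by (intro open_INT ballI open_Int open_Collect_imp closed_Collect_const open_Collect_less
          continuous_on_add continuous_on_const continuous_on_lift_component) simp
    finally show ?thesis .
  qed
  moreover have "D \<noteq> {}"
  proof -
    define x :: "real ^ 'm option" where
      "x = (\<chi> k. if k = a then 2*B + 1 else if k = b then - (2*B + 1) else 0)"
    define y where "y = (\<chi> k. x $ Some k - x $ None)"
    have "B \<ge> 0" using bound(1)[of a] by linarith
    moreover have "lift y $ k = x $ k - x $ None" for k
      unfolding y_def by (rule lift_normalize)
    ultimately have "y \<in> D" using ab(1) by (auto simp: D_def x_def)
    then show ?thesis by blast
  qed
  ultimately show ?thesis using interior_maximal by blast
qed

theorem mainTheorem3:
  fixes C :: nat and w :: "nat \<Rightarrow> real ^ ('m::finite option)"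
  assumes "C \<ge> 2"
  shows "interior (boundary_set C w) = {} \<longleftrightarrow>
         (\<forall>i\<in>{1..C}. \<forall>j\<in>{1..C}. i \<noteq> j \<longrightarrow> weak_gen_pos (w i) (w j))"
  using interior_boundary_set_empty interior_boundary_set_nonempty by blast

end
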